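(* Let $A\bowtie^{\theta} I$ be an amalgamated Banach algebra as in the context, and assume $A\bowtie^{\theta} I$ is commutative. Then $A\bowtie^{\theta} I$ is weakly amenable if and only if both $A$ and $I$ are weakly amenable.
   Context: Let $A$ and $B$ be Banach algebras, $\theta:A\to B$ a continuous algebra homomorphism with $\|\theta\|\le 1$, and $I$ a closed two-sided ideal of $B$. The amalgamated Banach algebra $A\bowtie^{\theta} I$ is the Banach space $\{(a,i): a\in A,\ i\in I\}$ with norm $\|(a,i)\|=\|a\|+\|i\|$ and product $(a,i)\cdot(a',i')=(aa',\ \theta(a)i'+i\theta(a')+ii')$. A Banach algebra $C$ is weakly amenable if every bounded derivation $D:C\to C^*$ (i.e. bounded linear with $D(ab)=a\cdot D(b)+D(a)\cdot b$, where $\langle a\cdot f,b\rangle=f(ba)$, $\langle f\cdot a,b\rangle=f(ab)$) is inner, i.e. of the form $D(a)=a\cdot f-f\cdot a$ for some $f\in C^*$. *)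

theory Defs
  imports "HOL-Analysis.Analysis"
begin

text \<open>A (real) Banach algebra presented concretely: carrier set together with its
  operations.  This lets us treat the closed ideal I (with the induced structure)
  and the amalgamated algebra (with the l1-norm and twisted product) uniformly.\<close>

record 'a balg =
  bcarrier :: "'a set"
  badd :: "'a \<Rightarrow> 'a \<Rightarrow> 'a"
  bscale :: "real \<Rightarrow> 'a \<Rightarrow> 'a"
  bmul :: "'a \<Rightarrow> 'a \<Rightarrow> 'a"
  bnorm :: "'a \<Rightarrow> real"

text \<open>Elements of the dual C^*: bounded linear functionals on the carrier
  (values outside the carrier are irrelevant).\<close>
definition dual_elem :: "'a balg \<Rightarrow> ('a \<Rightarrow> real) \<Rightarrow> bool" where
  "dual_elem C f \<longleftrightarrow>
     (\<forall>x\<in>bcarrier C. \<forall>y\<in>bcarrier C. f (badd C x y) = f x + f y) \<and>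
     (\<forall>r. \<forall>x\<in>bcarrier C. f (bscale C r x) = r * f x) \<and>
     (\<exists>K. \<forall>x\<in>bcarrier C. \<bar>f x\<bar> \<le> K * bnorm C x)"

text \<open>Bounded derivations D : C \<rightarrow> C^*, with \<open>\<langle>a\<cdot>f,b\<rangle> = f(ba)\<close> and
  \<open>\<langle>f\<cdot>a,b\<rangle> = f(ab)\<close>; here \<open>D a c\<close> stands for \<open>\<langle>D(a), c\<rangle>\<close>.\<close>
definition bderivation :: "'a balg \<Rightarrow> ('a \<Rightarrow> 'a \<Rightarrow> real) \<Rightarrow> bool" where
  "bderivation C D \<longleftrightarrow>
     (\<forall>a\<in>bcarrier C. dual_elem C (D a)) \<and>
     (\<forall>a\<in>bcarrier C. \<forall>a'\<in>bcarrier C. \<forall>c\<in>bcarrier C.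
        D (badd C a a') c = D a c + D a' c) \<and>
     (\<forall>r. \<forall>a\<in>bcarrier C. \<forall>c\<in>bcarrier C. D (bscale C r a) c = r * D a c) \<and>
     (\<exists>K. \<forall>a\<in>bcarrier C. \<forall>c\<in>bcarrier C. \<bar>D a c\<bar> \<le> K * bnorm C a * bnorm C c) \<and>
     (\<forall>a\<in>bcarrier C. \<forall>b\<in>bcarrier C. \<forall>c\<in>bcarrier C.
        D (bmul C a b) c = D b (bmul C c a) + D a (bmul C b c))"

definition inner_derivation :: "'a balg \<Rightarrow> ('a \<Rightarrow> 'a \<Rightarrow> real) \<Rightarrow> bool" where
  "inner_derivation C D \<longleftrightarrow>
     (\<exists>f. dual_elem C f \<and>
        (\<forall>a\<in>bcarrier C. \<forall>c\<in>bcarrier C. D a c = f (bmul C c a) - f (bmul C a c)))"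

definition weakly_amenable :: "'a balg \<Rightarrow> bool" where
  "weakly_amenable C \<longleftrightarrow> (\<forall>D. bderivation C D \<longrightarrow> inner_derivation C D)"

text \<open>The Banach algebra structure of a subset S of a normed algebra type
  (S = UNIV gives the algebra itself; S = I gives the ideal I).\<close>
definition sub_balg :: "'a::real_normed_algebra set \<Rightarrow> 'a balg" where
  "sub_balg S = \<lparr>bcarrier = S, badd = (+), bscale = scaleR, bmul = (*), bnorm = norm\<rparr>"

definition amalg :: "('a::real_normed_algebra \<Rightarrow> 'b::real_normed_algebra) \<Rightarrow> 'b set
    \<Rightarrow> ('a \<times> 'b) balg" where
  "amalg \<theta> I = \<lparr>bcarrier = UNIV \<times> I,
     badd = (\<lambda>(a,i) (a',i'). (a + a', i + i')),
     bscale = (\<lambda>r (a,i). (r *\<^sub>R a, r *\<^sub>R i)),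
     bmul = (\<lambda>(a,i) (a',i'). (a * a', \<theta> a * i' + i * \<theta> a' + i * i')),
     bnorm = (\<lambda>(a,i). norm a + norm i)\<rparr>"

definition closed_two_sided_ideal :: "'b::real_normed_algebra set \<Rightarrow> bool" where
  "closed_two_sided_ideal I \<longleftrightarrow> closed I \<and> 0 \<in> I \<and>
     (\<forall>x\<in>I. \<forall>y\<in>I. x + y \<in> I) \<and> (\<forall>r. \<forall>x\<in>I. r *\<^sub>R x \<in> I) \<and>
     (\<forall>b. \<forall>x\<in>I. b * x \<in> I \<and> x * b \<in> I)"

definition balg_commutative :: "'a balg \<Rightarrow> bool" where
  "balg_commutative C \<longleftrightarrow> (\<forall>x\<in>bcarrier C. \<forall>y\<in>bcarrier C. bmul C x y = bmul C y x)"

end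

theory Submission
  imports Defs
begin

text \<open>In a commutative weakly amenable algebra every bounded derivation into the dual vanishes,
  and so does every bounded functional killing all products. The projection \<open>(a, i) \<mapsto> a\<close> is
  a surjective homomorphism, so \<open>A\<close> inherits weak amenability. Conversely, a derivation of
  \<open>A \<bowtie>\<^sup>\<theta> I\<close> splits into its restrictions to \<open>A\<close> and \<open>I\<close>, which vanish, and two mixed parts,
  which kill products in \<open>I\<close> and so vanish too.

  For \<open>I\<close> itself, let \<open>D\<close> be a derivation of \<open>I\<close> and let \<open>C = A \<bowtie>\<^sup>\<theta> I\<close> act on \<open>I\<close>. The defect
  \<open>\<delta>\<^sub>x(j, m) = D(x j)(m) - D(j)(x m)\<close> satisfies \<open>\<delta>\<^sub>x(y u, m) = \<delta>\<^sub>x(u, y m)\<close>, hence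
  \<open>(x, c) \<mapsto> \<delta>\<^sub>x(u, c w)\<close> is a derivation of \<open>C\<close> and vanishes. Taking \<open>x = i\<close> and \<open>c = k\<close> in \<open>I\<close> gives
  \<open>D(i)(u k w) = 0\<close>, and two applications of the functional argument remove the products.\<close>

lemma bcarrier_amalg [simp]: "bcarrier (amalg \<theta> I) = UNIV \<times> I"
  unfolding amalg_def by simp

lemma badd_amalg [simp]: "badd (amalg \<theta> I) x y = (fst x + fst y, snd x + snd y)"
  by (simp add: amalg_def case_prod_beta)

lemma bscale_amalg [simp]: "bscale (amalg \<theta> I) r x = (r *\<^sub>R fst x, r *\<^sub>R snd x)"
  by (simp add: amalg_def case_prod_beta)

lemma bmul_amalg [simp]:
  "bmul (amalg \<theta> I) x y = (fst x * fst y, \<theta> (fst x) * snd y + snd x * \<theta> (fst y) + snd x * snd y)"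
  by (simp add: amalg_def case_prod_beta)

lemma bnorm_amalg [simp]: "bnorm (amalg \<theta> I) x = norm (fst x) + norm (snd x)"
  by (simp add: amalg_def case_prod_beta)

lemma sub_balg_simps [simp]:
  "bcarrier (sub_balg S) = S" "badd (sub_balg S) = (+)" "bscale (sub_balg S) = scaleR"
  "bmul (sub_balg S) = (*)" "bnorm (sub_balg S) = norm"
  by (simp_all add: sub_balg_def)

lemma dual_elemI:
  assumes "\<And>x y. x \<in> bcarrier C \<Longrightarrow> y \<in> bcarrier C \<Longrightarrow> f (badd C x y) = f x + f y"
    and "\<And>r x. x \<in> bcarrier C \<Longrightarrow> f (bscale C r x) = r * f x"
    and "\<And>x. x \<in> bcarrier C \<Longrightarrow> \<bar>f x\<bar> \<le> K * bnorm C x"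
  shows "dual_elem C f"
  unfolding dual_elem_def using assms by blast

lemma dual_elem_bound_nonneg:
  assumes "dual_elem C f" and "\<And>x. bnorm C x \<ge> 0"
  obtains K where "K \<ge> 0" and "\<And>x. x \<in> bcarrier C \<Longrightarrow> \<bar>f x\<bar> \<le> K * bnorm C x"
proof -
  obtain K where K: "\<And>x. x \<in> bcarrier C \<Longrightarrow> \<bar>f x\<bar> \<le> K * bnorm C x"
    using assms(1) unfolding dual_elem_def by blast
  have "\<bar>f x\<bar> \<le> max K 0 * bnorm C x" if "x \<in> bcarrier C" for x
  proof -
    have "K * bnorm C x \<le> max K 0 * bnorm C x"
      using assms(2) by (intro mult_right_mono) auto
    with K[OF that] show ?thesis by linarith
  qed
  then show thesis by (intro that[of "max K 0"]) auto
qed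

lemma bderivationI:
  assumes "\<And>a x y. a \<in> bcarrier C \<Longrightarrow> x \<in> bcarrier C \<Longrightarrow> y \<in> bcarrier C \<Longrightarrow>
      D a (badd C x y) = D a x + D a y"
    and "\<And>a r x. a \<in> bcarrier C \<Longrightarrow> x \<in> bcarrier C \<Longrightarrow> D a (bscale C r x) = r * D a x"
    and "\<And>a a' c. a \<in> bcarrier C \<Longrightarrow> a' \<in> bcarrier C \<Longrightarrow> c \<in> bcarrier C \<Longrightarrow>
      D (badd C a a') c = D a c + D a' c"
    and "\<And>r a c. a \<in> bcarrier C \<Longrightarrow> c \<in> bcarrier C \<Longrightarrow> D (bscale C r a) c = r * D a c"
    and "\<And>a c. a \<in> bcarrier C \<Longrightarrow> c \<in> bcarrier C \<Longrightarrow> \<bar>D a c\<bar> \<le> K * bnorm C a * bnorm C c"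
    and "\<And>a b c. a \<in> bcarrier C \<Longrightarrow> b \<in> bcarrier C \<Longrightarrow> c \<in> bcarrier C \<Longrightarrow>
      D (bmul C a b) c = D b (bmul C c a) + D a (bmul C b c)"
  shows "bderivation C D"
proof -
  have "dual_elem C (D a)" if "a \<in> bcarrier C" for a
  proof (rule dual_elemI[where K = "K * bnorm C a"])
    fix x assume "x \<in> bcarrier C"
    with assms(5) that show "\<bar>D a x\<bar> \<le> K * bnorm C a * bnorm C x" .
  qed (use assms(1,2) that in auto)
  with assms(3-6) show ?thesis
    unfolding bderivation_def by blast
qed

lemma bderivationD:
  assumes "bderivation C D"
  shows "\<And>a x y. a \<in> bcarrier C \<Longrightarrow> x \<in> bcarrier C \<Longrightarrow> y \<in> bcarrier C \<Longrightarrow>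
      D a (badd C x y) = D a x + D a y"
    and "\<And>a r x. a \<in> bcarrier C \<Longrightarrow> x \<in> bcarrier C \<Longrightarrow> D a (bscale C r x) = r * D a x"
    and "\<And>a a' c. a \<in> bcarrier C \<Longrightarrow> a' \<in> bcarrier C \<Longrightarrow> c \<in> bcarrier C \<Longrightarrow>
      D (badd C a a') c = D a c + D a' c"
    and "\<And>r a c. a \<in> bcarrier C \<Longrightarrow> c \<in> bcarrier C \<Longrightarrow> D (bscale C r a) c = r * D a c"
    and "\<And>a b c. a \<in> bcarrier C \<Longrightarrow> b \<in> bcarrier C \<Longrightarrow> c \<in> bcarrier C \<Longrightarrow>
      D (bmul C a b) c = D b (bmul C c a) + D a (bmul C b c)"
  using assms unfolding bderivation_def dual_elem_def by blast+

lemma bderivation_bound_nonneg: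
  assumes "bderivation C D" and "\<And>x. bnorm C x \<ge> 0"
  obtains K where "K \<ge> 0"
    and "\<And>a c. a \<in> bcarrier C \<Longrightarrow> c \<in> bcarrier C \<Longrightarrow> \<bar>D a c\<bar> \<le> K * bnorm C a * bnorm C c"
proof -
  obtain K where K: "\<And>a c. a \<in> bcarrier C \<Longrightarrow> c \<in> bcarrier C \<Longrightarrow> \<bar>D a c\<bar> \<le> K * bnorm C a * bnorm C c"
    using assms(1) unfolding bderivation_def by blast
  have "\<bar>D a c\<bar> \<le> max K 0 * bnorm C a * bnorm C c"
    if "a \<in> bcarrier C" "c \<in> bcarrier C" for a c
  proof -
    have "K * bnorm C a * bnorm C c \<le> max K 0 * bnorm C a * bnorm C c"
      using assms(2) by (intro mult_right_mono) auto
    with K[OF that] show ?thesis by linarith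
  qed
  then show thesis by (intro that[of "max K 0"]) auto
qed

lemma bderivation_vanishes:
  assumes "weakly_amenable C" "balg_commutative C" "bderivation C D"
    and "a \<in> bcarrier C" "c \<in> bcarrier C"
  shows "D a c = 0"
proof -
  obtain f where "\<forall>a\<in>bcarrier C. \<forall>c\<in>bcarrier C. D a c = f (bmul C c a) - f (bmul C a c)"
    using assms(1,3) unfolding weakly_amenable_def inner_derivation_def by blast
  with assms(2,4,5) show ?thesis unfolding balg_commutative_def by auto
qed

lemma weakly_amenableI_vanishing:
  assumes "\<And>D a c. bderivation C D \<Longrightarrow> a \<in> bcarrier C \<Longrightarrow> c \<in> bcarrier C \<Longrightarrow> D a c = 0"
  shows "weakly_amenable C"
proof -
  have "dual_elem C (\<lambda>_. 0)"
    by (rule dual_elemI[where K=0]) auto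
  with assms show ?thesis
    unfolding weakly_amenable_def inner_derivation_def by (intro allI impI exI[of _ "\<lambda>_. 0"]) auto
qed

text \<open>\<open>a \<mapsto> \<phi>(a) \<phi>\<close> is a derivation, and \<open>\<phi>(x) \<phi>(x) = 0\<close> forces \<open>\<phi>(x) = 0\<close>.\<close>
lemma dual_elem_vanishes_if_kills_products:
  assumes "weakly_amenable C" "balg_commutative C" "dual_elem C \<phi>"
    and kills: "\<And>x y. x \<in> bcarrier C \<Longrightarrow> y \<in> bcarrier C \<Longrightarrow> \<phi> (bmul C x y) = 0"
    and "x \<in> bcarrier C"
  shows "\<phi> x = 0"
proof -
  obtain K where K: "\<And>x. x \<in> bcarrier C \<Longrightarrow> \<bar>\<phi> x\<bar> \<le> K * bnorm C x"
    using assms(3) unfolding dual_elem_def by blast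
  have "bderivation C (\<lambda>a c. \<phi> a * \<phi> c)"
  proof (rule bderivationI[where K = "K * K"])
    fix a c assume "a \<in> bcarrier C" "c \<in> bcarrier C"
    then have "\<bar>\<phi> a\<bar> * \<bar>\<phi> c\<bar> \<le> (K * bnorm C a) * (K * bnorm C c)"
      using K by (intro mult_mono) (auto intro: order_trans[OF abs_ge_zero])
    then show "\<bar>\<phi> a * \<phi> c\<bar> \<le> K * K * bnorm C a * bnorm C c"
      by (simp add: abs_mult ac_simps)
  qed (use assms(3) kills in \<open>auto simp: dual_elem_def distrib_left distrib_right\<close>)
  from bderivation_vanishes[OF assms(1,2) this \<open>x \<in> bcarrier C\<close> \<open>x \<in> bcarrier C\<close>]
  show ?thesis by simp
qed

definition bounded_balg_hom :: "'a balg \<Rightarrow> 'b balg \<Rightarrow> ('a \<Rightarrow> 'b) \<Rightarrow> bool" where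
  "bounded_balg_hom A C h \<longleftrightarrow>
     (\<forall>x\<in>bcarrier A. h x \<in> bcarrier C) \<and>
     (\<forall>x\<in>bcarrier A. \<forall>y\<in>bcarrier A. h (badd A x y) = badd C (h x) (h y)) \<and>
     (\<forall>r. \<forall>x\<in>bcarrier A. h (bscale A r x) = bscale C r (h x)) \<and>
     (\<forall>x\<in>bcarrier A. \<forall>y\<in>bcarrier A. h (bmul A x y) = bmul C (h x) (h y)) \<and>
     (\<exists>M. \<forall>x\<in>bcarrier A. bnorm C (h x) \<le> M * bnorm A x)"

lemma bderivation_comp_hom:
  assumes D: "bderivation C D" and h: "bounded_balg_hom A C h"
    and nonneg: "\<And>x. bnorm C x \<ge> 0"
  shows "bderivation A (\<lambda>a c. D (h a) (h c))"
proof -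
  obtain K where K0: "K \<ge> 0"
    and K: "\<And>a c. a \<in> bcarrier C \<Longrightarrow> c \<in> bcarrier C \<Longrightarrow> \<bar>D a c\<bar> \<le> K * bnorm C a * bnorm C c"
    using bderivation_bound_nonneg[OF D nonneg] by blast
  obtain M where M: "\<And>x. x \<in> bcarrier A \<Longrightarrow> bnorm C (h x) \<le> M * bnorm A x"
    using h unfolding bounded_balg_hom_def by blast
  have into: "\<And>x. x \<in> bcarrier A \<Longrightarrow> h x \<in> bcarrier C"
    using h unfolding bounded_balg_hom_def by blast
  show ?thesis
  proof (rule bderivationI[where K = "K * M * M"])
    fix a c assume a: "a \<in> bcarrier A" and c: "c \<in> bcarrier A"
    have le_a: "K * bnorm C (h a) \<le> K * (M * bnorm A a)"
      using M[OF a] K0 by (rule mult_left_mono)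
    have "0 \<le> K * bnorm C (h a)"
      using K0 nonneg by simp
    then have "K * bnorm C (h a) * bnorm C (h c) \<le> K * (M * bnorm A a) * (M * bnorm A c)"
      using le_a by (intro mult_mono[OF le_a M[OF c]] nonneg) linarith
    with K[OF into[OF a] into[OF c]]
    show "\<bar>D (h a) (h c)\<bar> \<le> K * M * M * bnorm A a * bnorm A c"
      by (simp add: ac_simps)
  qed (use h in \<open>simp_all add: bounded_balg_hom_def bderivationD[OF D]\<close>)
qed

lemma weakly_amenable_hom_image:
  assumes "weakly_amenable C" "balg_commutative C" "bounded_balg_hom C A h"
    and onto: "bcarrier A \<subseteq> h ` bcarrier C" and "\<And>x. bnorm A x \<ge> 0"
  shows "weakly_amenable A"
proof (rule weakly_amenableI_vanishing)
  fix D a c assume "bderivation A D" "a \<in> bcarrier A" "c \<in> bcarrier A"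
  moreover obtain a' c' where "a' \<in> bcarrier C" "c' \<in> bcarrier C" "a = h a'" "c = h c'"
    using onto \<open>a \<in> bcarrier A\<close> \<open>c \<in> bcarrier A\<close> by blast
  ultimately show "D a c = 0"
    using bderivation_vanishes[OF assms(1,2) bderivation_comp_hom] assms(3,5) by blast
qed

text \<open>The action of the amalgamated algebra on \<open>I\<close>: \<open>bmul (amalg \<theta> I) x (0, m) = (0, amalg_act \<theta> x m)\<close>.\<close>
definition amalg_act :: "('a::real_normed_algebra \<Rightarrow> 'b::real_normed_algebra) \<Rightarrow> 'a \<times> 'b \<Rightarrow> 'b \<Rightarrow> 'b"
  where "amalg_act \<theta> x m = \<theta> (fst x) * m + snd x * m"

locale amalg_comm =
  fixes \<theta> :: "'a::real_normed_algebra \<Rightarrow> 'b::real_normed_algebra"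
    and I :: "'b set"
  assumes bounded_linear_theta: "bounded_linear \<theta>"
    and theta_mult: "\<And>x y. \<theta> (x * y) = \<theta> x * \<theta> y"
    and onorm_theta: "onorm \<theta> \<le> 1"
    and ideal: "closed_two_sided_ideal I"
    and commutative: "balg_commutative (amalg \<theta> I)"
begin

sublocale theta: bounded_linear \<theta>
  by (rule bounded_linear_theta)

lemma norm_theta_le: "norm (\<theta> x) \<le> norm x"
proof -
  have "norm (\<theta> x) \<le> onorm \<theta> * norm x"
    by (rule onorm[OF bounded_linear_theta])
  also have "\<dots> \<le> norm x"
    using mult_right_mono[OF onorm_theta norm_ge_zero] by simp
  finally show ?thesis .
qed

lemma ideal_zero [simp]: "0 \<in> I"
  and ideal_add: "x \<in> I \<Longrightarrow> y \<in> I \<Longrightarrow> x + y \<in> I"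
  and ideal_mult_left: "x \<in> I \<Longrightarrow> b * x \<in> I"
  and ideal_mult_right: "x \<in> I \<Longrightarrow> x * b \<in> I"
  using ideal unfolding closed_two_sided_ideal_def by blast+

lemma amalg_mult_commute: "snd x \<in> I \<Longrightarrow> snd y \<in> I \<Longrightarrow> bmul (amalg \<theta> I) x y = bmul (amalg \<theta> I) y x"
  using commutative unfolding balg_commutative_def by (metis UNIV_I bcarrier_amalg mem_Times_iff)

lemma mult_commute_A: "a * b = b * (a :: 'a)"
  using amalg_mult_commute[of "(a, 0)" "(b, 0)"] by simp

lemma mult_commute_I: "i \<in> I \<Longrightarrow> j \<in> I \<Longrightarrow> i * j = j * i"
  using amalg_mult_commute[of "(0, i)" "(0, j)"] by simp

lemma theta_mult_commute: "j \<in> I \<Longrightarrow> \<theta> a * j = j * \<theta> a"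
  using amalg_mult_commute[of "(a, 0)" "(0, j)"] by simp

lemma balg_commutative_A: "balg_commutative (sub_balg (UNIV :: 'a set))"
  unfolding balg_commutative_def by (simp add: mult_commute_A)

lemma balg_commutative_I: "balg_commutative (sub_balg I)"
  unfolding balg_commutative_def by (simp add: mult_commute_I)

lemma bounded_balg_hom_fst: "bounded_balg_hom (amalg \<theta> I) (sub_balg UNIV) fst"
  unfolding bounded_balg_hom_def by (auto intro: exI[of _ 1])

lemma bounded_balg_hom_inl: "bounded_balg_hom (sub_balg UNIV) (amalg \<theta> I) (\<lambda>a. (a, 0))"
  unfolding bounded_balg_hom_def by (auto intro: exI[of _ 1])

lemma bounded_balg_hom_inr: "bounded_balg_hom (sub_balg I) (amalg \<theta> I) (\<lambda>i. (0, i))"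
  unfolding bounded_balg_hom_def by (auto intro: exI[of _ 1])

lemma weakly_amenable_A:
  assumes "weakly_amenable (amalg \<theta> I)"
  shows "weakly_amenable (sub_balg (UNIV :: 'a set))"
proof (rule weakly_amenable_hom_image[OF assms commutative bounded_balg_hom_fst])
  show "bcarrier (sub_balg UNIV) \<subseteq> fst ` bcarrier (amalg \<theta> I)"
  proof
    fix a show "a \<in> fst ` bcarrier (amalg \<theta> I)"
      by (rule image_eqI[of _ _ "(a, 0)"]) simp_all
  qed
qed simp

lemma amalg_derivation_mixed_vanishes:
  assumes waI: "weakly_amenable (sub_balg I)" and D: "bderivation (amalg \<theta> I) D"
    and DI: "\<And>i j. i \<in> I \<Longrightarrow> j \<in> I \<Longrightarrow> D (0, i) (0, j) = 0"
    and "i \<in> I"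
  shows "D (0, i) (a, 0) = 0" and "D (a, 0) (0, i) = 0"
proof -
  note d = bderivationD[OF D, simplified]
  obtain K where "\<And>a c. a \<in> bcarrier (amalg \<theta> I) \<Longrightarrow> c \<in> bcarrier (amalg \<theta> I) \<Longrightarrow>
      \<bar>D a c\<bar> \<le> K * bnorm (amalg \<theta> I) a * bnorm (amalg \<theta> I) c"
    using D unfolding bderivation_def by blast
  note K = this[simplified]
  show "D (0, i) (a, 0) = 0"
  proof (rule dual_elem_vanishes_if_kills_products[OF waI balg_commutative_I, of "\<lambda>i. D (0, i) (a, 0)"])
    show "dual_elem (sub_balg I) (\<lambda>i. D (0, i) (a, 0))"
    proof (rule dual_elemI[where K = "K * norm a"])
      fix j k r assume "j \<in> bcarrier (sub_balg I)" "k \<in> bcarrier (sub_balg I)"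
      then show "D (0, badd (sub_balg I) j k) (a, 0) = D (0, j) (a, 0) + D (0, k) (a, 0)"
        and "D (0, bscale (sub_balg I) r j) (a, 0) = r * D (0, j) (a, 0)"
        and "\<bar>D (0, j) (a, 0)\<bar> \<le> K * norm a * bnorm (sub_balg I) j"
        using d(3)[of "(0, j)" "(0, k)" "(a, 0)"] d(4)[of "(0, j)" "(a, 0)" r] K[of "(0, j)" "(a, 0)"]
        by (simp_all add: ac_simps)
    qed
    fix j k assume "j \<in> bcarrier (sub_balg I)" "k \<in> bcarrier (sub_balg I)"
    then show "D (0, bmul (sub_balg I) j k) (a, 0) = 0"
      using d(5)[of "(0, j)" "(0, k)" "(a, 0)"] DI[of k "\<theta> a * j"] DI[of j "k * \<theta> a"]
      by (simp add: ideal_mult_left ideal_mult_right)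
  qed (use \<open>i \<in> I\<close> in simp)
  show "D (a, 0) (0, i) = 0"
  proof (rule dual_elem_vanishes_if_kills_products[OF waI balg_commutative_I, of "\<lambda>i. D (a, 0) (0, i)"])
    show "dual_elem (sub_balg I) (\<lambda>i. D (a, 0) (0, i))"
    proof (rule dual_elemI[where K = "K * norm a"])
      fix j k r assume "j \<in> bcarrier (sub_balg I)" "k \<in> bcarrier (sub_balg I)"
      then show "D (a, 0) (0, badd (sub_balg I) j k) = D (a, 0) (0, j) + D (a, 0) (0, k)"
        and "D (a, 0) (0, bscale (sub_balg I) r j) = r * D (a, 0) (0, j)"
        and "\<bar>D (a, 0) (0, j)\<bar> \<le> K * norm a * bnorm (sub_balg I) j"
        using d(1)[of "(a, 0)" "(0, j)" "(0, k)"] d(2)[of "(a, 0)" "(0, j)" r] K[of "(a, 0)" "(0, j)"]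
        by (simp_all add: ac_simps)
    qed
    fix j k assume "j \<in> bcarrier (sub_balg I)" "k \<in> bcarrier (sub_balg I)"
    then show "D (a, 0) (0, bmul (sub_balg I) j k) = 0"
      using d(5)[of "(a, 0)" "(0, j)" "(0, k)"] DI[of "\<theta> a * j" k] DI[of j "k * \<theta> a"]
      by (simp add: ideal_mult_left ideal_mult_right)
  qed (use \<open>i \<in> I\<close> in simp)
qed

lemma weakly_amenable_amalg:
  assumes waA: "weakly_amenable (sub_balg (UNIV :: 'a set))" and waI: "weakly_amenable (sub_balg I)"
  shows "weakly_amenable (amalg \<theta> I)"
proof (rule weakly_amenableI_vanishing)
  fix D x y
  assume D: "bderivation (amalg \<theta> I) D"
    and "x \<in> bcarrier (amalg \<theta> I)" "y \<in> bcarrier (amalg \<theta> I)"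
  then have x2: "snd x \<in> I" and y2: "snd y \<in> I" by auto
  note d = bderivationD[OF D, simplified]
  have DA: "D (a, 0) (c, 0) = 0" for a c
    using bderivation_vanishes[OF waA balg_commutative_A
        bderivation_comp_hom[OF D bounded_balg_hom_inl], of a c] by simp
  have DI: "D (0, i) (0, j) = 0" if "i \<in> I" "j \<in> I" for i j
    using bderivation_vanishes[OF waI balg_commutative_I
        bderivation_comp_hom[OF D bounded_balg_hom_inr], of i j] that by simp
  have DIA: "D (0, i) (a, 0) = 0" and DAI: "D (a, 0) (0, i) = 0" if "i \<in> I" for i a
    using amalg_derivation_mixed_vanishes[OF waI D DI] that by blast+
  have "D x y = D x (fst y, 0) + D x (0, snd y)"
    using d(1)[of x "(fst y, 0)" "(0, snd y)"] x2 y2 by (simp add: mem_Times_iff)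
  moreover have "D x c = D (fst x, 0) c + D (0, snd x) c" if "snd c \<in> I" for c
    using d(3)[of "(fst x, 0)" "(0, snd x)" c] x2 that by (simp add: mem_Times_iff)
  ultimately show "D x y = 0"
    using DA DI DIA DAI x2 y2 by simp
qed

lemma ideal_functional_vanishes_if_kills_products:
  assumes wa: "weakly_amenable (amalg \<theta> I)" and \<phi>: "dual_elem (sub_balg I) \<phi>"
    and kills: "\<And>i j. i \<in> I \<Longrightarrow> j \<in> I \<Longrightarrow> \<phi> (i * j) = 0"
    and "m \<in> I"
  shows "\<phi> m = 0"
proof -
  obtain K where K0: "K \<ge> 0" and K: "\<And>i. i \<in> I \<Longrightarrow> \<bar>\<phi> i\<bar> \<le> K * norm i"
    using dual_elem_bound_nonneg[OF \<phi>] by auto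
  have add: "\<And>i j. i \<in> I \<Longrightarrow> j \<in> I \<Longrightarrow> \<phi> (i + j) = \<phi> i + \<phi> j"
    and scale: "\<And>r i. i \<in> I \<Longrightarrow> \<phi> (r *\<^sub>R i) = r * \<phi> i"
    using \<phi> unfolding dual_elem_def by auto
  have "bderivation (amalg \<theta> I) (\<lambda>x c. \<phi> (\<theta> (fst c) * snd x))"
  proof (rule bderivationI[where K = K])
    fix x c assume "x \<in> bcarrier (amalg \<theta> I)" "c \<in> bcarrier (amalg \<theta> I)"
    then have "\<bar>\<phi> (\<theta> (fst c) * snd x)\<bar> \<le> K * norm (\<theta> (fst c) * snd x)"
      by (intro K ideal_mult_left) auto
    also have "\<dots> \<le> K * (norm (fst c) * norm (snd x))"
      using K0 norm_theta_le
      by (intro mult_left_mono order_trans[OF norm_mult_ineq] mult_right_mono) auto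
    also have "\<dots> \<le> K * (bnorm (amalg \<theta> I) c * bnorm (amalg \<theta> I) x)"
      using K0 by (intro mult_left_mono mult_mono) auto
    finally show "\<bar>\<phi> (\<theta> (fst c) * snd x)\<bar> \<le> K * bnorm (amalg \<theta> I) x * bnorm (amalg \<theta> I) c"
      by (simp add: ac_simps)
  next
    fix x y c assume "x \<in> bcarrier (amalg \<theta> I)" "y \<in> bcarrier (amalg \<theta> I)"
      "c \<in> bcarrier (amalg \<theta> I)"
    then have x2: "snd x \<in> I" and y2: "snd y \<in> I" by auto
    have "\<theta> (fst c) * snd (bmul (amalg \<theta> I) x y)
        = \<theta> (fst c * fst x) * snd y + \<theta> (fst y * fst c) * snd x + \<theta> (fst c) * snd x * snd y"
      using theta_mult_commute[OF x2, of "fst y"]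
      by (simp add: theta_mult distrib_left mult.assoc mult_commute_A[of "fst y"])
    then show "\<phi> (\<theta> (fst c) * snd (bmul (amalg \<theta> I) x y))
        = \<phi> (\<theta> (fst (bmul (amalg \<theta> I) c x)) * snd y) + \<phi> (\<theta> (fst (bmul (amalg \<theta> I) y c)) * snd x)"
      using x2 y2 kills[of "\<theta> (fst c) * snd x" "snd y"]
      by (simp add: add ideal_add ideal_mult_left)
  qed (auto simp: add scale theta.add theta.scaleR distrib_left distrib_right ideal_mult_left)
  from bderivation_vanishes[OF wa commutative this]
  have kills_theta: "\<phi> (\<theta> a * i) = 0" if "i \<in> I" for a i
    using that by (metis bcarrier_amalg fst_conv mem_Times_iff snd_conv UNIV_I ideal_zero)
  have "dual_elem (amalg \<theta> I) (\<lambda>x. \<phi> (snd x))"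
  proof (rule dual_elemI[where K = K])
    fix x assume "x \<in> bcarrier (amalg \<theta> I)"
    then have "\<bar>\<phi> (snd x)\<bar> \<le> K * norm (snd x)" by (intro K) auto
    also have "\<dots> \<le> K * bnorm (amalg \<theta> I) x"
      using K0 by (intro mult_left_mono) auto
    finally show "\<bar>\<phi> (snd x)\<bar> \<le> K * bnorm (amalg \<theta> I) x" .
  qed (auto simp: add scale)
  then have "\<phi> (snd (0 :: 'a, m)) = 0"
  proof (rule dual_elem_vanishes_if_kills_products[OF wa commutative])
    fix x y assume "x \<in> bcarrier (amalg \<theta> I)" "y \<in> bcarrier (amalg \<theta> I)"
    then have x2: "snd x \<in> I" and y2: "snd y \<in> I" by auto
    then show "\<phi> (snd (bmul (amalg \<theta> I) x y)) = 0"
      using kills_theta[OF y2, of "fst x"] kills_theta[OF x2, of "fst y"] kills[OF x2 y2]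
        theta_mult_commute[OF x2, of "fst y"]
      by (simp add: add ideal_add ideal_mult_left ideal_mult_right)
  qed (use \<open>m \<in> I\<close> in simp)
  then show ?thesis by simp
qed

abbreviation act :: "'a \<times> 'b \<Rightarrow> 'b \<Rightarrow> 'b" (infixr \<open>\<rhd>\<close> 75)
  where "x \<rhd> m \<equiv> amalg_act \<theta> x m"

lemma act_mem: "m \<in> I \<Longrightarrow> x \<rhd> m \<in> I"
  by (simp add: amalg_act_def ideal_add ideal_mult_left)

lemma act_add_right: "x \<rhd> (m + n) = x \<rhd> m + x \<rhd> n"
  by (simp add: amalg_act_def algebra_simps)

lemma act_scaleR_right: "x \<rhd> (r *\<^sub>R m) = r *\<^sub>R (x \<rhd> m)"
  by (simp add: amalg_act_def scaleR_right_distrib)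

lemma act_add_left: "(fst x + fst y, snd x + snd y) \<rhd> m = x \<rhd> m + y \<rhd> m"
  by (simp add: amalg_act_def theta.add algebra_simps)

lemma act_scaleR_left: "(r *\<^sub>R fst x, r *\<^sub>R snd x) \<rhd> m = r *\<^sub>R (x \<rhd> m)"
  by (simp add: amalg_act_def theta.scaleR scaleR_right_distrib)

lemma act_bmul: "bmul (amalg \<theta> I) x y \<rhd> m = x \<rhd> y \<rhd> m"
  by (simp add: amalg_act_def theta_mult algebra_simps)

lemma act_commute: "snd x \<in> I \<Longrightarrow> snd y \<in> I \<Longrightarrow> x \<rhd> y \<rhd> m = y \<rhd> x \<rhd> m"
  by (metis act_bmul amalg_mult_commute)

lemma act_mult_right: "x \<rhd> (p * q) = (x \<rhd> p) * q"
  by (simp add: amalg_act_def algebra_simps)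

lemma mult_act: "k \<in> I \<Longrightarrow> snd x \<in> I \<Longrightarrow> k * (x \<rhd> n) = x \<rhd> (k * n)"
  by (simp add: amalg_act_def distrib_left mult.assoc[symmetric] mult_commute_I theta_mult_commute)

lemma act_inr [simp]: "(0, i) \<rhd> m = i * m"
  by (simp add: amalg_act_def)

lemma norm_act_le: "norm (x \<rhd> m) \<le> bnorm (amalg \<theta> I) x * norm m"
proof -
  have "norm (x \<rhd> m) \<le> norm (\<theta> (fst x)) * norm m + norm (snd x) * norm m"
    unfolding amalg_act_def by (intro order_trans[OF norm_triangle_ineq] add_mono norm_mult_ineq)
  also have "\<dots> \<le> norm (fst x) * norm m + norm (snd x) * norm m"
    by (intro add_right_mono mult_right_mono norm_theta_le) simp
  finally show ?thesis by (simp add: distrib_right)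
qed

end

locale amalg_ideal_derivation = amalg_comm +
  fixes D :: "'b \<Rightarrow> 'b \<Rightarrow> real"
  assumes amalg_weakly_amenable: "weakly_amenable (amalg \<theta> I)"
    and derivation: "bderivation (sub_balg I) D"
begin

lemmas D_add_right = bderivationD(1)[OF derivation, simplified]
  and D_scale_right = bderivationD(2)[OF derivation, simplified]
  and D_add_left = bderivationD(3)[OF derivation, simplified]
  and D_scale_left = bderivationD(4)[OF derivation, simplified]
  and D_leibniz = bderivationD(5)[OF derivation, simplified]

definition defect :: "'a \<times> 'b \<Rightarrow> 'b \<Rightarrow> 'b \<Rightarrow> real"
  where "defect x j m = D (x \<rhd> j) m - D j (x \<rhd> m)"

lemma defect_add_right: "j \<in> I \<Longrightarrow> m \<in> I \<Longrightarrow> n \<in> I \<Longrightarrow> defect x j (m + n) = defect x j m + defect x j n"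
  by (simp add: defect_def act_add_right D_add_right act_mem)

lemma defect_scale_right: "j \<in> I \<Longrightarrow> m \<in> I \<Longrightarrow> defect x j (r *\<^sub>R m) = r * defect x j m"
  by (simp add: defect_def act_scaleR_right D_scale_right act_mem algebra_simps)

lemma defect_add_left:
  "j \<in> I \<Longrightarrow> m \<in> I \<Longrightarrow> defect (fst x + fst y, snd x + snd y) j m = defect x j m + defect y j m"
  by (simp add: defect_def act_add_left D_add_left D_add_right act_mem)

lemma defect_scale_left: "j \<in> I \<Longrightarrow> m \<in> I \<Longrightarrow> defect (r *\<^sub>R fst x, r *\<^sub>R snd x) j m = r * defect x j m"
  by (simp add: defect_def act_scaleR_left D_scale_left D_scale_right act_mem algebra_simps)

lemma defect_bound:
  obtains K where "K \<ge> 0"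
    and "\<And>x j m. j \<in> I \<Longrightarrow> m \<in> I \<Longrightarrow> \<bar>defect x j m\<bar> \<le> K * bnorm (amalg \<theta> I) x * norm j * norm m"
proof -
  obtain K where K0: "K \<ge> 0" and K: "\<And>p q. p \<in> I \<Longrightarrow> q \<in> I \<Longrightarrow> \<bar>D p q\<bar> \<le> K * norm p * norm q"
    using bderivation_bound_nonneg[OF derivation] by auto
  have "\<bar>defect x j m\<bar> \<le> (2 * K) * bnorm (amalg \<theta> I) x * norm j * norm m"
    if j: "j \<in> I" and m: "m \<in> I" for x j m
  proof -
    have "\<bar>defect x j m\<bar> \<le> \<bar>D (x \<rhd> j) m\<bar> + \<bar>D j (x \<rhd> m)\<bar>"
      unfolding defect_def by (rule abs_triangle_ineq4)
    also have "\<dots> \<le> K * norm (x \<rhd> j) * norm m + K * norm j * norm (x \<rhd> m)"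
      using K act_mem j m by (intro add_mono) auto
    also have "\<dots> \<le> K * (bnorm (amalg \<theta> I) x * norm j) * norm m + K * norm j * (bnorm (amalg \<theta> I) x * norm m)"
      using K0 by (intro add_mono mult_right_mono mult_left_mono norm_act_le) auto
    finally show ?thesis by (simp add: algebra_simps)
  qed
  with K0 show thesis by (intro that[of "2 * K"]) auto
qed

lemma defect_swap:
  assumes j: "j \<in> I" and k: "k \<in> I" and m: "m \<in> I"
  shows "defect x j (k * m) = defect x k (j * m)"
proof -
  have "D ((x \<rhd> j) * k) m = D k (m * (x \<rhd> j)) + D (x \<rhd> j) (k * m)"
    and "D ((x \<rhd> k) * j) m = D j (m * (x \<rhd> k)) + D (x \<rhd> k) (j * m)"
    using D_leibniz act_mem j k m by auto
  moreover have "(x \<rhd> j) * k = (x \<rhd> k) * j"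
    by (metis act_mult_right j k mult_commute_I)
  moreover have "x \<rhd> (k * m) = m * (x \<rhd> k)" and "x \<rhd> (j * m) = m * (x \<rhd> j)"
    by (simp_all add: act_mult_right act_mem j k m mult_commute_I)
  ultimately show ?thesis
    unfolding defect_def by simp
qed

text \<open>The difference of the two sides kills \<open>I\<^sup>2\<close> by \<open>defect_swap\<close>, so it vanishes.\<close>
lemma defect_act:
  assumes x: "snd x \<in> I" and y: "snd y \<in> I" and u: "u \<in> I" and m: "m \<in> I"
  shows "defect x (y \<rhd> u) m = defect x u (y \<rhd> m)"
proof -
  define \<phi> where "\<phi> n = defect x (y \<rhd> u) n - defect x u (y \<rhd> n)" for n
  obtain K where K0: "K \<ge> 0"
    and K: "\<And>x j m. j \<in> I \<Longrightarrow> m \<in> I \<Longrightarrow> \<bar>defect x j m\<bar> \<le> K * bnorm (amalg \<theta> I) x * norm j * norm m"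
    using defect_bound by blast
  have "dual_elem (sub_balg I) \<phi>"
  proof (rule dual_elemI[where K = "K * bnorm (amalg \<theta> I) x * (norm (y \<rhd> u) + norm u * bnorm (amalg \<theta> I) y)"])
    fix n assume "n \<in> bcarrier (sub_balg I)"
    then have n: "n \<in> I" by simp
    have "\<bar>\<phi> n\<bar> \<le> \<bar>defect x (y \<rhd> u) n\<bar> + \<bar>defect x u (y \<rhd> n)\<bar>"
      unfolding \<phi>_def by (rule abs_triangle_ineq4)
    also have "\<dots> \<le> K * bnorm (amalg \<theta> I) x * norm (y \<rhd> u) * norm n
        + K * bnorm (amalg \<theta> I) x * norm u * norm (y \<rhd> n)"
      using K act_mem u n by (intro add_mono) auto
    also have "\<dots> \<le> K * bnorm (amalg \<theta> I) x * norm (y \<rhd> u) * norm n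
        + K * bnorm (amalg \<theta> I) x * norm u * (bnorm (amalg \<theta> I) y * norm n)"
      using K0 by (intro add_left_mono mult_left_mono norm_act_le) auto
    finally show "\<bar>\<phi> n\<bar> \<le> K * bnorm (amalg \<theta> I) x * (norm (y \<rhd> u) + norm u * bnorm (amalg \<theta> I) y)
        * bnorm (sub_balg I) n"
      by (simp add: algebra_simps)
  qed (simp_all add: \<phi>_def defect_add_right defect_scale_right act_add_right act_scaleR_right
      act_mem u algebra_simps)
  moreover have "\<phi> (k * n) = 0" if k: "k \<in> I" and n: "n \<in> I" for k n
  proof -
    have "defect x (y \<rhd> u) (k * n) = defect x k ((y \<rhd> u) * n)"
      by (rule defect_swap[OF act_mem[OF u] k n])
    also have "(y \<rhd> u) * n = u * (y \<rhd> n)"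
      by (metis act_mult_right act_mem mult_commute_I u n)
    also have "defect x k (u * (y \<rhd> n)) = defect x u (k * (y \<rhd> n))"
      by (rule defect_swap[OF k u act_mem[OF n]])
    also have "k * (y \<rhd> n) = y \<rhd> (k * n)"
      by (rule mult_act[OF k y])
    finally show ?thesis by (simp add: \<phi>_def)
  qed
  ultimately have "\<phi> m = 0"
    using ideal_functional_vanishes_if_kills_products[OF amalg_weakly_amenable] m by blast
  then show ?thesis by (simp add: \<phi>_def)
qed

lemma defect_bmul:
  assumes x: "snd x \<in> I" and y: "snd y \<in> I" and u: "u \<in> I" and m: "m \<in> I"
  shows "defect (bmul (amalg \<theta> I) x y) u m = defect y u (x \<rhd> m) + defect x u (y \<rhd> m)"
  using defect_act[OF x y u m]
  unfolding defect_def act_bmul act_commute[OF y x, of m] by linarith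

lemma bderivation_defect:
  assumes u: "u \<in> I" and w: "w \<in> I"
  shows "bderivation (amalg \<theta> I) (\<lambda>x c. defect x u (c \<rhd> w))"
proof -
  obtain K where K0: "K \<ge> 0"
    and K: "\<And>x j m. j \<in> I \<Longrightarrow> m \<in> I \<Longrightarrow> \<bar>defect x j m\<bar> \<le> K * bnorm (amalg \<theta> I) x * norm j * norm m"
    using defect_bound by blast
  show ?thesis
  proof (rule bderivationI[where K = "K * norm u * norm w"])
    fix x c assume "x \<in> bcarrier (amalg \<theta> I)" "c \<in> bcarrier (amalg \<theta> I)"
    have "\<bar>defect x u (c \<rhd> w)\<bar> \<le> K * bnorm (amalg \<theta> I) x * norm u * norm (c \<rhd> w)"
      by (rule K[OF u act_mem[OF w]])
    also have "\<dots> \<le> K * bnorm (amalg \<theta> I) x * norm u * (bnorm (amalg \<theta> I) c * norm w)"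
      using K0 by (intro mult_left_mono norm_act_le) auto
    finally show "\<bar>defect x u (c \<rhd> w)\<bar>
        \<le> K * norm u * norm w * bnorm (amalg \<theta> I) x * bnorm (amalg \<theta> I) c"
      by (simp add: ac_simps)
  next
    fix x y c assume "x \<in> bcarrier (amalg \<theta> I)" "y \<in> bcarrier (amalg \<theta> I)"
      "c \<in> bcarrier (amalg \<theta> I)"
    then have x: "snd x \<in> I" and y: "snd y \<in> I" and c: "snd c \<in> I" by auto
    show "defect (bmul (amalg \<theta> I) x y) u (c \<rhd> w)
        = defect y u (bmul (amalg \<theta> I) c x \<rhd> w) + defect x u (bmul (amalg \<theta> I) y c \<rhd> w)"
      unfolding defect_bmul[OF x y u act_mem[OF w]] act_bmul act_commute[OF x c] ..
  qed (simp_all add: u w act_mem act_add_left act_scaleR_left defect_add_left defect_add_right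
      defect_scale_left defect_scale_right)
qed

lemma D_vanishes_on_triple_products:
  assumes i: "i \<in> I" and u: "u \<in> I" and k: "k \<in> I" and w: "w \<in> I"
  shows "D i (u * (k * w)) = 0"
proof -
  have "defect (0, i) u ((0, k) \<rhd> w) = 0"
    using i k by (intro bderivation_vanishes[OF amalg_weakly_amenable commutative bderivation_defect[OF u w]])
      simp_all
  then have "D (i * u) (k * w) = D u (i * (k * w))"
    by (simp add: defect_def)
  moreover have "D (i * u) (k * w) = D u (i * (k * w)) + D i (u * (k * w))"
    using D_leibniz[of i u "k * w"] i u k w mult_commute_I[of "k * w" i]
    by (simp add: ideal_mult_left)
  ultimately show ?thesis by simp
qed

lemma D_vanishes_on_products:
  assumes i: "i \<in> I" and u: "u \<in> I" and m: "m \<in> I"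
  shows "D i (u * m) = 0"
proof (rule ideal_functional_vanishes_if_kills_products[OF amalg_weakly_amenable, of "\<lambda>m. D i (u * m)"])
  obtain K where K0: "K \<ge> 0" and K: "\<And>p q. p \<in> I \<Longrightarrow> q \<in> I \<Longrightarrow> \<bar>D p q\<bar> \<le> K * norm p * norm q"
    using bderivation_bound_nonneg[OF derivation] by auto
  show "dual_elem (sub_balg I) (\<lambda>m. D i (u * m))"
  proof (rule dual_elemI[where K = "K * norm i * norm u"])
    fix m assume "m \<in> bcarrier (sub_balg I)"
    then have "\<bar>D i (u * m)\<bar> \<le> K * norm i * norm (u * m)"
      using K i by (simp add: ideal_mult_left)
    also have "\<dots> \<le> K * norm i * (norm u * norm m)"
      using K0 by (intro mult_left_mono norm_mult_ineq) auto
    finally show "\<bar>D i (u * m)\<bar> \<le> K * norm i * norm u * bnorm (sub_balg I) m"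
      by (simp add: ac_simps)
  qed (simp_all add: i distrib_left D_add_right D_scale_right ideal_mult_left)
qed (simp_all add: D_vanishes_on_triple_products i u m)

lemma D_vanishes:
  assumes "i \<in> I" and "k \<in> I"
  shows "D i k = 0"
proof (rule ideal_functional_vanishes_if_kills_products[OF amalg_weakly_amenable])
  show "dual_elem (sub_balg I) (D i)"
    using derivation \<open>i \<in> I\<close> unfolding bderivation_def by simp
qed (simp_all add: D_vanishes_on_products assms)

end

lemma (in amalg_comm) weakly_amenable_I:
  assumes "weakly_amenable (amalg \<theta> I)"
  shows "weakly_amenable (sub_balg I)"
proof (rule weakly_amenableI_vanishing)
  fix D i k assume "bderivation (sub_balg I) D" "i \<in> bcarrier (sub_balg I)" "k \<in> bcarrier (sub_balg I)"
  then interpret amalg_ideal_derivation \<theta> I D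
    using assms by unfold_locales
  show "D i k = 0"
    using D_vanishes \<open>i \<in> bcarrier (sub_balg I)\<close> \<open>k \<in> bcarrier (sub_balg I)\<close> by simp
qed

theorem theorem6p1:
  fixes \<theta> :: "'a::{real_normed_algebra, banach} \<Rightarrow> 'b::{real_normed_algebra, banach}"
    and I :: "'b set"
  assumes "bounded_linear \<theta>"
    and "\<And>x y. \<theta> (x * y) = \<theta> x * \<theta> y"
    and "onorm \<theta> \<le> 1"
    and "closed_two_sided_ideal I"
    and "balg_commutative (amalg \<theta> I)"
  shows "weakly_amenable (amalg \<theta> I) \<longleftrightarrow>
         weakly_amenable (sub_balg (UNIV :: 'a set)) \<and> weakly_amenable (sub_balg I)"
proof -
  interpret amalg_comm \<theta> I
    by (rule amalg_comm.intro[OF assms])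
  show ?thesis
    using weakly_amenable_A weakly_amenable_I weakly_amenable_amalg by blast
qed

end
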